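(* Let $\varphi:[0,1]\to[0,1]$ be continuous and non-decreasing with $\varphi(0)=0$, $\varphi(1)=1$, and let $m\geq1$ be an integer. Call $\psi:[0,1]\to\mathbb R$ piecewise constant with $m+1$ pieces if there exist $0=t_0\leq t_1\leq\dots\leq t_m\leq t_{m+1}=1$ such that $\psi$ is constant on each $[t_{i-1},t_i)$, $i=1,\dots,m+1$. Then there exists a piecewise constant $\psi$ with $m+1$ pieces and $\psi\leq\varphi$ on $[0,1]$ that attains $$c_m=\inf\left\{\int_0^1(\varphi(t)-\psi(t))\,dt:\ \psi \text{ piecewise constant with } m+1 \text{ pieces},\ \psi\leq\varphi\right\}.$$ *)

theory Defs
  imports "HOL-Analysis.Analysis"
begin

definition piecewise_const :: "nat \<Rightarrow> (real \<Rightarrow> real) \<Rightarrow> bool" where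
  "piecewise_const m \<psi> \<longleftrightarrow>
     (\<exists>t :: nat \<Rightarrow> real. t 0 = 0 \<and> t (m + 1) = 1 \<and>
        (\<forall>i \<le> m. t i \<le> t (Suc i)) \<and>
        (\<forall>i \<in> {1..m + 1}. \<exists>c. \<forall>x \<in> {t (i - 1)..<t i}. \<psi> x = c))"

definition c_opt :: "nat \<Rightarrow> (real \<Rightarrow> real) \<Rightarrow> real" where
  "c_opt m \<phi> = Inf {integral {0..1} (\<lambda>t. \<phi> t - \<psi> t) | \<psi>.
       piecewise_const m \<psi> \<and> (\<forall>t \<in> {0..1}. \<psi> t \<le> \<phi> t)}"

end

theory Submission
  imports Defs
begin

text \<open>Fix breakpoints \<open>0 = t(0) \<le> \<dots> \<le> t(m+1) = 1\<close>. An admissible \<open>\<psi>\<close> is constant on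
  \<open>[t(i-1), t(i))\<close> with value \<open>\<psi>(t(i-1)) \<le> \<phi>(t(i-1))\<close>, so its integral is at most the left
  sum \<open>\<Sum>\<^sub>i \<phi>(t(i-1)) (t(i) - t(i-1))\<close>; for monotone \<open>\<phi>\<close> the step function with exactly
  these values is itself admissible. The left sum depends continuously on the breakpoint
  vector, which ranges over a compact set, so it has a maximiser, and the step function
  of a maximiser is optimal.\<close>

lemma chain_le:
  fixes t :: "nat \<Rightarrow> 'a::order"
  assumes "\<And>k. k < n \<Longrightarrow> t k \<le> t (Suc k)" and "i \<le> j" and "j \<le> n"
  shows "t i \<le> t j"
  using assms(2,3)
proof (induction j rule: dec_induct)
  case (step j)
  then show ?case using assms(1)[of j] by simp
qed simp

lemma has_integral_step_function:
  fixes t c :: "nat \<Rightarrow> real" and f :: "real \<Rightarrow> real"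
  assumes "\<And>i. i < n \<Longrightarrow> t i \<le> t (Suc i)"
    and "\<And>i x. i \<in> {1..n} \<Longrightarrow> x \<in> {t (i - 1)..<t i} \<Longrightarrow> f x = c i"
  shows "(f has_integral (\<Sum>i=1..n. c i * (t i - t (i - 1)))) {t 0..t n}"
  using assms
proof (induction n)
  case 0
  show ?case using has_integral_refl(2) by simp
next
  case (Suc n)
  have left: "(f has_integral (\<Sum>i=1..n. c i * (t i - t (i - 1)))) {t 0..t n}"
    using Suc by simp
  have "t 0 \<le> t n" and le: "t n \<le> t (Suc n)"
    using chain_le[of "Suc n" t 0 n] Suc.prems(1) by auto
  moreover have "(f has_integral (c (Suc n) * (t (Suc n) - t n))) {t n..t (Suc n)}"
  proof (rule has_integral_spike_finite[where S = "{t (Suc n)}"])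
    show "((\<lambda>_. c (Suc n)) has_integral c (Suc n) * (t (Suc n) - t n)) {t n..t (Suc n)}"
      using has_integral_const_real[of "c (Suc n)" "t n" "t (Suc n)"] le
      by (simp add: mult.commute)
  qed (use Suc.prems(2)[of "Suc n"] in auto)
  ultimately show ?case
    using has_integral_combine[OF _ _ left] by (simp add: add.commute)
qed

text \<open>Coordinates beyond \<open>m + 1\<close> are irrelevant; confining all of them to \<open>[0, 1]\<close>
  makes the set compact in the product topology.\<close>
definition breakpoints :: "nat \<Rightarrow> (nat \<Rightarrow> real) set" where
  "breakpoints m = {t. (\<forall>i. t i \<in> {0..1}) \<and> t 0 = 0 \<and> t (m + 1) = 1 \<and>
     (\<forall>i\<le>m. t i \<le> t (Suc i))}"

definition left_sum :: "nat \<Rightarrow> (real \<Rightarrow> real) \<Rightarrow> (nat \<Rightarrow> real) \<Rightarrow> real" where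
  "left_sum m \<phi> t = (\<Sum>i=1..m + 1. \<phi> (t (i - 1)) * (t i - t (i - 1)))"

lemma compact_breakpoints: "compact (breakpoints m)"
proof -
  have "breakpoints m = Pi UNIV (\<lambda>_. {0..1}) \<inter> ({t. t 0 = 0} \<inter> {t. t (m + 1) = 1} \<inter>
      (\<Inter>i\<in>{..m}. {t. t i \<le> t (Suc i)}))"
    unfolding breakpoints_def by auto
  also have "compact \<dots>"
  proof (rule compact_Int_closed)
    show "compact (Pi UNIV (\<lambda>_::nat. {0..1::real}))"
      using compactin_PiE[of "\<lambda>_::nat. euclidean" UNIV "\<lambda>_. {0..1::real}"]
      by (simp add: euclidean_product_topology PiE_UNIV_domain)
    show "closed ({t :: nat \<Rightarrow> real. t 0 = 0} \<inter> {t. t (m + 1) = 1} \<inter>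
        (\<Inter>i\<in>{..m}. {t. t i \<le> t (Suc i)}))"
      by (intro closed_Int closed_INT ballI closed_Collect_eq closed_Collect_le
          continuous_on_product_coordinates continuous_on_const)
  qed
  finally show ?thesis .
qed

lemma breakpoints_nonempty: "(\<lambda>i. if i \<le> m then 0 else 1) \<in> breakpoints m"
  unfolding breakpoints_def by auto

lemma continuous_on_left_sum:
  assumes "continuous_on {0..1} \<phi>"
  shows "continuous_on (breakpoints m) (left_sum m \<phi>)"
proof -
  have "continuous_on (breakpoints m) (\<lambda>t. \<phi> (t i))" for i
    by (rule continuous_on_compose2[OF assms
          continuous_on_subset[OF continuous_on_product_coordinates]])
      (auto simp: breakpoints_def)
  then show ?thesis
    unfolding left_sum_def
    by (intro continuous_intros continuous_on_subset[OF continuous_on_product_coordinates]) auto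
qed

lemma piecewise_const_integral_le_left_sum:
  assumes "piecewise_const m \<psi>" and below: "\<forall>x\<in>{0..1}. \<psi> x \<le> \<phi> x"
  obtains t I where "t \<in> breakpoints m" "(\<psi> has_integral I) {0..1}" "I \<le> left_sum m \<phi> t"
proof -
  obtain t where t0: "t 0 = 0" and t1: "t (m + 1) = 1" and mono: "\<forall>i\<le>m. t i \<le> t (Suc i)"
    and "\<forall>i\<in>{1..m + 1}. \<exists>c. \<forall>x\<in>{t (i - 1)..<t i}. \<psi> x = c"
    using assms(1) unfolding piecewise_const_def by blast
  then obtain c where c: "\<forall>i\<in>{1..m + 1}. \<forall>x\<in>{t (i - 1)..<t i}. \<psi> x = c i"
    by metis
  have "(\<psi> has_integral (\<Sum>i=1..m + 1. c i * (t i - t (i - 1)))) {t 0..t (m + 1)}"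
    by (rule has_integral_step_function) (use mono c in auto)
  then have integral: "(\<psi> has_integral (\<Sum>i=1..m + 1. c i * (t i - t (i - 1)))) {0..1}"
    using t0 t1 by simp
  have range: "t i \<in> {0..1}" if "i \<le> m + 1" for i
    using chain_le[of "m + 1" t 0 i] chain_le[of "m + 1" t i "m + 1"] mono t0 t1 that by auto
  define s where "s i = t (min i (m + 1))" for i
  have s: "s \<in> breakpoints m"
    unfolding breakpoints_def s_def using range t0 t1 mono by auto
  have "(\<Sum>i=1..m + 1. c i * (t i - t (i - 1))) \<le> left_sum m \<phi> t"
    unfolding left_sum_def
  proof (rule sum_mono)
    fix i assume i: "i \<in> {1..m + 1}"
    show "c i * (t i - t (i - 1)) \<le> \<phi> (t (i - 1)) * (t i - t (i - 1))"
    proof (cases "t (i - 1) < t i")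
      case True
      then have "c i = \<psi> (t (i - 1))" using c i by auto
      also have "\<dots> \<le> \<phi> (t (i - 1))" using below range i by auto
      finally show ?thesis using True by (intro mult_right_mono) auto
    next
      case False
      moreover have "t (i - 1) \<le> t i"
        using chain_le[of "m + 1" t "i - 1" i] mono i by auto
      ultimately show ?thesis by simp
    qed
  qed
  also have "left_sum m \<phi> t = left_sum m \<phi> s"
    unfolding left_sum_def s_def by (intro sum.cong) auto
  finally show thesis using that s integral by blast
qed

definition left_step :: "nat \<Rightarrow> (real \<Rightarrow> real) \<Rightarrow> (nat \<Rightarrow> real) \<Rightarrow> real \<Rightarrow> real" where
  "left_step m \<phi> s x = \<phi> (Max (s ` {j. j \<le> m \<and> s j \<le> x}))"

context
  fixes m :: nat and s :: "nat \<Rightarrow> real" and \<phi> :: "real \<Rightarrow> real"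
  assumes s: "s \<in> breakpoints m"
begin

lemma left_step_on_piece:
  assumes i: "i \<in> {1..m + 1}" and x: "x \<in> {s (i - 1)..<s i}"
  shows "left_step m \<phi> s x = \<phi> (s (i - 1))"
proof -
  have mono: "\<And>k. k < m + 1 \<Longrightarrow> s k \<le> s (Suc k)"
    using s unfolding breakpoints_def by auto
  have "s j \<le> s (i - 1)" if "j \<le> m" "s j \<le> x" for j
  proof -
    have "\<not> i \<le> j"
      using chain_le[of "m + 1" s i j] mono that x by auto
    then show ?thesis
      using chain_le[of "m + 1" s j "i - 1"] mono i by auto
  qed
  moreover have "s (i - 1) \<in> s ` {j. j \<le> m \<and> s j \<le> x}"
    using i x by auto
  ultimately have "Max (s ` {j. j \<le> m \<and> s j \<le> x}) = s (i - 1)"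
    by (intro Max_eqI) auto
  then show ?thesis
    unfolding left_step_def by simp
qed

lemma piecewise_const_left_step: "piecewise_const m (left_step m \<phi> s)"
proof -
  have "\<forall>i\<in>{1..m + 1}. \<exists>c. \<forall>x\<in>{s (i - 1)..<s i}. left_step m \<phi> s x = c"
    using left_step_on_piece by blast
  then show ?thesis
    unfolding piecewise_const_def using s by (intro exI[of _ s]) (auto simp: breakpoints_def)
qed

lemma left_step_le:
  assumes "mono_on {0..1} \<phi>" and x: "x \<in> {0..1}"
  shows "left_step m \<phi> s x \<le> \<phi> x"
proof -
  let ?S = "s ` {j. j \<le> m \<and> s j \<le> x}"
  have "s 0 \<in> ?S"
    using s x unfolding breakpoints_def by auto
  then have "Max ?S \<in> ?S"
    by (intro Max_in) auto
  then have "Max ?S \<le> x" and "Max ?S \<in> {0..1}"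
    using s unfolding breakpoints_def by auto
  then show ?thesis
    unfolding left_step_def using assms by (auto intro: mono_onD)
qed

lemma has_integral_left_step: "(left_step m \<phi> s has_integral left_sum m \<phi> s) {0..1}"
proof -
  have "(left_step m \<phi> s has_integral left_sum m \<phi> s) {s 0..s (m + 1)}"
    unfolding left_sum_def
    by (rule has_integral_step_function) (use s left_step_on_piece in \<open>auto simp: breakpoints_def\<close>)
  then show ?thesis
    using s unfolding breakpoints_def by simp
qed

end

theorem proposition4:
  fixes \<phi> :: "real \<Rightarrow> real" and m :: nat
  assumes "continuous_on {0..1} \<phi>"
    and "mono_on {0..1} \<phi>"
    and "\<phi> ` {0..1} \<subseteq> {0..1}"
    and "\<phi> 0 = 0" and "\<phi> 1 = 1"
    and "m \<ge> 1"
  shows "\<exists>\<psi>. piecewise_const m \<psi> \<and> (\<forall>t \<in> {0..1}. \<psi> t \<le> \<phi> t) \<and>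
             integral {0..1} (\<lambda>t. \<phi> t - \<psi> t) = c_opt m \<phi>"
proof -
  obtain s where s: "s \<in> breakpoints m"
    and s_max: "\<And>t. t \<in> breakpoints m \<Longrightarrow> left_sum m \<phi> t \<le> left_sum m \<phi> s"
    using continuous_attains_sup[OF compact_breakpoints _ continuous_on_left_sum[OF assms(1)]]
      breakpoints_nonempty by blast
  define \<psi> where "\<psi> = left_step m \<phi> s"
  have \<phi>_integral: "(\<phi> has_integral integral {0..1} \<phi>) {0..1}"
    using assms(1) integrable_continuous_real by blast
  have gap: "integral {0..1} (\<lambda>x. \<phi> x - f x) = integral {0..1} \<phi> - I"
    if "(f has_integral I) {0..1}" for f I
    using has_integral_diff[OF \<phi>_integral that] by (simp add: integral_unique)
  have admissible: "piecewise_const m \<psi> \<and> (\<forall>t \<in> {0..1}. \<psi> t \<le> \<phi> t)"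
    unfolding \<psi>_def using piecewise_const_left_step[OF s] left_step_le[OF s assms(2)] by simp
  have "integral {0..1} (\<lambda>x. \<phi> x - \<psi> x) \<le> integral {0..1} (\<lambda>x. \<phi> x - f x)"
    if f: "piecewise_const m f" "\<forall>t \<in> {0..1}. f t \<le> \<phi> t" for f
  proof -
    obtain t I where t: "t \<in> breakpoints m" and I: "(f has_integral I) {0..1}"
      and I_le: "I \<le> left_sum m \<phi> t"
      using piecewise_const_integral_le_left_sum[OF f] .
    have "integral {0..1} (\<lambda>x. \<phi> x - \<psi> x) = integral {0..1} \<phi> - left_sum m \<phi> s"
      using gap[OF has_integral_left_step[OF s]] unfolding \<psi>_def .
    also have "\<dots> \<le> integral {0..1} \<phi> - I"
      using s_max[OF t] I_le by linarith
    also have "\<dots> = integral {0..1} (\<lambda>x. \<phi> x - f x)"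
      using gap[OF I] by simp
    finally show ?thesis .
  qed
  then have "c_opt m \<phi> = integral {0..1} (\<lambda>x. \<phi> x - \<psi> x)"
    unfolding c_opt_def by (intro cInf_eq_minimum) (use admissible in blast)+
  then show ?thesis
    using admissible by metis
qed

end
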